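(* Consider a multi-rate fluid assignment (rates $\theta_i^L$ for $\tau_i\in\tau$; $\theta_{i,j}^H$, $\theta_i^H$ for $\tau_i\in\tau_H$, $1\le j\le n_H$; window durations $w_1,\dots,w_{n_H}\ge 0$) such that $\theta_{i,j}^H=\theta_i^H$ for all $\tau_i\in\tau_H$ and all $1\le j\le n_H$. Then the multi-rate conditions (S1)–(S5) hold if and only if the dual-rate conditions (D1)–(D5) hold.
   Context: Task system $\tau$ on $m$ identical processors; each task $\tau_i$ has period/deadline $T_i>0$, criticality in $\{LO,HI\}$, WCETs $C_i^L\le C_i^H$, $u_i^L=C_i^L/T_i\le1$, $u_i^H=C_i^H/T_i\le1$; $\tau_H$ is the set of HI-tasks, $n_H=|\tau_H|$. All rates lie in $(0,1]$ (transition rates in $[0,1]$). The earliest completion window of $\tau_i\in\tau_H$ is the largest $k_i\in\{1,\dots,n_H+1\}$ with $\sum_{j:1\le j<k_i}w_j<T_i-C_i^L/\theta_i^L$; $R_i=\theta_{i,k_i}^H$ if $k_i\le n_H$ and $R_i=\theta_i^H$ otherwise; by convention $\theta_{i,n_H+1}^H:=\theta_i^H$. Multi-rate conditions: (S1) $\theta_i^L\ge u_i^L$ for all $\tau_i\in\tau$; (S2) $\sum_{\tau_i\in\tau}\theta_i^L\le m$; (S3) $\sum_{\tau_i\in\tau_H}\theta_{i,j}^H\le m$ for all $1\le j\le n_H$, and $\sum_{\tau_i\in\tau_H}\theta_i^H\le m$; (S4) for all $\tau_i\in\tau_H$: $\sum_{j<k_i}\theta_{i,j}^Hw_j+R_i(T_i-C_i^L/\theta_i^L-\sum_{j<k_i}w_j)\ge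 C_i^H-C_i^L$, $\theta_i^L\le\theta_{i,j}^H$ for $k_i\le j\le n_H$, and $\theta_i^L\le\theta_i^H$; (S5) for all $\tau_i\in\tau_H$: $\sum_{j<k_i}\theta_{i,j}^Hw_j\ge u_i^H\sum_{j<k_i}w_j$, $\theta_{i,j}^H\le\theta_{i,j+1}^H$ for $1\le j<k_i$, $\theta_{i,j}^H\ge u_i^H$ for $k_i\le j\le n_H$, and $\theta_i^H\ge u_i^H$. Dual-rate conditions: (D1) $\theta_i^L\ge u_i^L$ for all $\tau_i\in\tau$; (D2) $u_i^L/\theta_i^L+(u_i^H-u_i^L)/\theta_i^H\le1$ for all $\tau_i\in\tau_H$; (D3) $\theta_i^H\ge\theta_i^L$ for all $\tau_i\in\tau_H$; (D4) $\sum_{\tau_i\in\tau}\theta_i^L\le m$; (D5) $\sum_{\tau_i\in\tau_H}\theta_i^H\le m$. *)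

theory Defs
  imports Complex_Main
begin

datatype crit = LO | HI

text \<open>Task set: a finite set tau of task identifiers; crit i is the criticality,
  per i the period/deadline, CL i and CH i the LO/HI WCETs.\<close>

definition HIset :: "'a set \<Rightarrow> ('a \<Rightarrow> crit) \<Rightarrow> 'a set" where
  "HIset tau crit = {i \<in> tau. crit i = HI}"

definition nH :: "'a set \<Rightarrow> ('a \<Rightarrow> crit) \<Rightarrow> nat" where
  "nH tau crit = card (HIset tau crit)"

definition task_system ::
  "'a set \<Rightarrow> ('a \<Rightarrow> crit) \<Rightarrow> ('a \<Rightarrow> real) \<Rightarrow> ('a \<Rightarrow> real) \<Rightarrow> ('a \<Rightarrow> real) \<Rightarrow> bool" where
  "task_system tau crit per CL CH \<longleftrightarrow> finite tau \<and>
     (\<forall>i\<in>tau. 0 < per i \<and> 0 \<le> CL i \<and> CL i \<le> CH i \<and> CL i / per i \<le> 1 \<and> CH i / per i \<le> 1)"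

definition rate_assignment ::
  "'a set \<Rightarrow> ('a \<Rightarrow> crit) \<Rightarrow> ('a \<Rightarrow> real) \<Rightarrow> ('a \<Rightarrow> nat \<Rightarrow> real) \<Rightarrow> ('a \<Rightarrow> real)
     \<Rightarrow> (nat \<Rightarrow> real) \<Rightarrow> bool" where
  "rate_assignment tau crit thL thHw thH w \<longleftrightarrow>
     (\<forall>i\<in>tau. 0 < thL i \<and> thL i \<le> 1) \<and>
     (\<forall>i\<in>HIset tau crit. 0 < thH i \<and> thH i \<le> 1) \<and>
     (\<forall>i\<in>HIset tau crit. \<forall>j\<in>{1..nH tau crit}. 0 \<le> thHw i j \<and> thHw i j \<le> 1) \<and>
     (\<forall>j\<in>{1..nH tau crit}. 0 \<le> w j)"

text \<open>Earliest completion window: the largest k in {1..n_H+1} with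
  sum_{1 \<le> j < k} w_j < T_i - C_i^L/theta_i^L.  (If no such k exists, which can only
  happen when T_i - C_i^L/theta_i^L \<le> 0, we use the convention k_i = 1.)\<close>
definition ecw ::
  "nat \<Rightarrow> (nat \<Rightarrow> real) \<Rightarrow> ('a \<Rightarrow> real) \<Rightarrow> ('a \<Rightarrow> real) \<Rightarrow> ('a \<Rightarrow> real) \<Rightarrow> 'a \<Rightarrow> nat" where
  "ecw n w per CL thL i =
     (if \<exists>k\<in>{1..n+1}. sum w {1..<k} < per i - CL i / thL i
      then (GREATEST k. k \<in> {1..n+1} \<and> sum w {1..<k} < per i - CL i / thL i)
      else 1)"

text \<open>R_i = theta^H_{i,k_i} if k_i \<le> n_H, and theta^H_i otherwise; equivalently this is
  theta^H_{i,k} with the convention theta^H_{i,n_H+1} := theta^H_i (also used in S5).\<close>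
definition Rrate ::
  "nat \<Rightarrow> ('a \<Rightarrow> nat \<Rightarrow> real) \<Rightarrow> ('a \<Rightarrow> real) \<Rightarrow> nat \<Rightarrow> 'a \<Rightarrow> real" where
  "Rrate n thHw thH k i = (if k \<le> n then thHw i k else thH i)"

definition multi_rate_conditions ::
  "'a set \<Rightarrow> ('a \<Rightarrow> crit) \<Rightarrow> ('a \<Rightarrow> real) \<Rightarrow> ('a \<Rightarrow> real) \<Rightarrow> ('a \<Rightarrow> real) \<Rightarrow> nat
     \<Rightarrow> ('a \<Rightarrow> real) \<Rightarrow> ('a \<Rightarrow> nat \<Rightarrow> real) \<Rightarrow> ('a \<Rightarrow> real) \<Rightarrow> (nat \<Rightarrow> real) \<Rightarrow> bool" where
  "multi_rate_conditions tau crit per CL CH m thL thHw thH w \<longleftrightarrow>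
     (let TH = HIset tau crit; n = nH tau crit; k = ecw n w per CL thL in
     \<comment> \<open>S1\<close> (\<forall>i\<in>tau. thL i \<ge> CL i / per i) \<and>
     \<comment> \<open>S2\<close> (\<Sum>i\<in>tau. thL i) \<le> real m \<and>
     \<comment> \<open>S3\<close> (\<forall>j\<in>{1..n}. (\<Sum>i\<in>TH. thHw i j) \<le> real m) \<and> (\<Sum>i\<in>TH. thH i) \<le> real m \<and>
     \<comment> \<open>S4\<close> (\<forall>i\<in>TH.
        (\<Sum>j\<in>{1..<k i}. thHw i j * w j)
          + Rrate n thHw thH (k i) i * (per i - CL i / thL i - (\<Sum>j\<in>{1..<k i}. w j))
          \<ge> CH i - CL i \<and>
        (\<forall>j\<in>{k i..n}. thL i \<le> thHw i j) \<and> thL i \<le> thH i) \<and>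
     \<comment> \<open>S5\<close> (\<forall>i\<in>TH.
        (\<Sum>j\<in>{1..<k i}. thHw i j * w j) \<ge> (CH i / per i) * (\<Sum>j\<in>{1..<k i}. w j) \<and>
        (\<forall>j\<in>{1..<k i}. thHw i j \<le> Rrate n thHw thH (j + 1) i) \<and>
        (\<forall>j\<in>{k i..n}. thHw i j \<ge> CH i / per i) \<and>
        thH i \<ge> CH i / per i))"

definition dual_rate_conditions ::
  "'a set \<Rightarrow> ('a \<Rightarrow> crit) \<Rightarrow> ('a \<Rightarrow> real) \<Rightarrow> ('a \<Rightarrow> real) \<Rightarrow> ('a \<Rightarrow> real) \<Rightarrow> nat
     \<Rightarrow> ('a \<Rightarrow> real) \<Rightarrow> ('a \<Rightarrow> real) \<Rightarrow> bool" where
  "dual_rate_conditions tau crit per CL CH m thL thH \<longleftrightarrow>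
     (let TH = HIset tau crit in
     \<comment> \<open>D1\<close> (\<forall>i\<in>tau. thL i \<ge> CL i / per i) \<and>
     \<comment> \<open>D2\<close> (\<forall>i\<in>TH. (CL i / per i) / thL i + (CH i / per i - CL i / per i) / thH i \<le> 1) \<and>
     \<comment> \<open>D3\<close> (\<forall>i\<in>TH. thH i \<ge> thL i) \<and>
     \<comment> \<open>D4\<close> (\<Sum>i\<in>tau. thL i) \<le> real m \<and>
     \<comment> \<open>D5\<close> (\<Sum>i\<in>TH. thH i) \<le> real m)"

end

theory Submission
  imports Defs
begin

(* When every HI-task runs at one HI rate theta^H_i in all windows, the window sums in S4 and S5
   collapse to theta^H_i times the total window length, R_i becomes theta^H_i, and the
   monotonicity conditions become trivial. S4 then says theta^H_i (T_i - C^L_i/theta^L_i) is at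
   least C^H_i - C^L_i, which after division by T_i theta^H_i is D2. The only S5 condition left,
   theta^H_i >= u^H_i, is implied by D2 and D3, since theta^L_i <= theta^H_i gives
   C^L_i <= theta^H_i C^L_i / theta^L_i. *)

lemma ecw_in_range: "ecw n w per CL thL i \<in> {1..n+1}"
proof (cases "\<exists>k\<in>{1..n+1}. sum w {1..<k} < per i - CL i / thL i")
  case True
  let ?P = "\<lambda>k. k \<in> {1..n+1} \<and> sum w {1..<k} < per i - CL i / thL i"
  from True obtain k where "?P k" by blast
  then have "?P (GREATEST k. ?P k)"
    by (rule GreatestI_nat[where b = "n+1"]) auto
  with True show ?thesis by (simp add: ecw_def)
qed (simp add: ecw_def)

lemma sum_constant_rate_windows:
  fixes r w :: "nat \<Rightarrow> real"
  assumes "\<forall>j\<in>{1..n}. r j = c" and "k \<le> n + 1"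
  shows "(\<Sum>j\<in>{1..<k}. r j * w j) = c * (\<Sum>j\<in>{1..<k}. w j)"
  unfolding sum_distrib_left by (rule sum.cong) (use assms in auto)

lemma dual_rate_budget_iff:
  fixes h l p cl ch :: real
  assumes "0 < h" "0 < l" "0 < p"
  shows "(cl / p) / l + (ch / p - cl / p) / h \<le> 1 \<longleftrightarrow> ch - cl \<le> h * (p - cl / l)"
proof -
  have "(cl / p) / l + (ch / p - cl / p) / h \<le> 1 \<longleftrightarrow> cl / l + (ch - cl) / h \<le> p"
    using assms by (simp add: field_simps)
  also have "\<dots> \<longleftrightarrow> (ch - cl) / h \<le> p - cl / l" by linarith
  also have "\<dots> \<longleftrightarrow> ch - cl \<le> h * (p - cl / l)"
    using assms by (simp add: divide_le_eq mult.commute)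
  finally show ?thesis .
qed

lemma utilization_le_hi_rate:
  fixes h l p cl ch :: real
  assumes "0 < l" "l \<le> h" "0 < p" "0 \<le> cl" and budget: "ch - cl \<le> h * (p - cl / l)"
  shows "ch / p \<le> h"
proof -
  have "cl \<le> h * (cl / l)"
    using assms by (simp add: field_simps mult_left_mono)
  with budget have "ch \<le> h * p" by (simp add: algebra_simps)
  with \<open>0 < p\<close> show ?thesis by (simp add: divide_le_eq mult.commute)
qed

lemma hi_task_conditions_constant_rate_iff:
  assumes const: "\<forall>j\<in>{1..n}. thHw i j = thH i" and k: "k \<in> {1..n+1}"
    and w: "\<forall>j\<in>{1..n}. 0 \<le> w j"
    and pos: "0 < thL i" "0 < thH i" "0 < per i" "0 \<le> CL i"
  shows "((\<Sum>j\<in>{1..<k}. thHw i j * w j)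
          + Rrate n thHw thH k i * (per i - CL i / thL i - (\<Sum>j\<in>{1..<k}. w j))
          \<ge> CH i - CL i \<and>
        (\<forall>j\<in>{k..n}. thL i \<le> thHw i j) \<and> thL i \<le> thH i) \<and>
       ((\<Sum>j\<in>{1..<k}. thHw i j * w j) \<ge> (CH i / per i) * (\<Sum>j\<in>{1..<k}. w j) \<and>
        (\<forall>j\<in>{1..<k}. thHw i j \<le> Rrate n thHw thH (j + 1) i) \<and>
        (\<forall>j\<in>{k..n}. thHw i j \<ge> CH i / per i) \<and>
        thH i \<ge> CH i / per i)
     \<longleftrightarrow> (CL i / per i) / thL i + (CH i / per i - CL i / per i) / thH i \<le> 1 \<and> thL i \<le> thH i"
    (is "?multi \<longleftrightarrow> ?dual")
proof -
  define W where "W = (\<Sum>j\<in>{1..<k}. w j)"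
  have "0 \<le> W"
    unfolding W_def using k w by (auto intro!: sum_nonneg)
  have "?multi \<longleftrightarrow> CH i - CL i \<le> thH i * (per i - CL i / thL i) \<and> thL i \<le> thH i \<and>
      CH i / per i * W \<le> thH i * W \<and> CH i / per i \<le> thH i"
    using const k sum_constant_rate_windows[of n "thHw i" "thH i" k w]
    by (auto simp: W_def Rrate_def algebra_simps)
  also have "\<dots> \<longleftrightarrow> ?dual"
    using dual_rate_budget_iff[of "thH i" "thL i" "per i"] pos \<open>0 \<le> W\<close>
      utilization_le_hi_rate[of "thL i" "thH i" "per i" "CL i" "CH i"] mult_right_mono
    by blast
  finally show ?thesis .
qed

theorem lemma2:
  fixes tau :: "'a set" and crit :: "'a \<Rightarrow> crit"
    and per CL CH :: "'a \<Rightarrow> real" and m :: nat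
    and thL thH :: "'a \<Rightarrow> real" and thHw :: "'a \<Rightarrow> nat \<Rightarrow> real" and w :: "nat \<Rightarrow> real"
  assumes "task_system tau crit per CL CH"
    and "rate_assignment tau crit thL thHw thH w"
    and "\<forall>i\<in>HIset tau crit. \<forall>j\<in>{1..nH tau crit}. thHw i j = thH i"
  shows "multi_rate_conditions tau crit per CL CH m thL thHw thH w
         \<longleftrightarrow> dual_rate_conditions tau crit per CL CH m thL thH"
proof -
  define n where "n = nH tau crit"
  define TH where "TH = HIset tau crit"
  have const: "\<forall>j\<in>{1..n}. thHw i j = thH i" if "i \<in> TH" for i
    using assms(3) that by (simp add: TH_def n_def)
  have S3: "(\<forall>j\<in>{1..n}. (\<Sum>i\<in>TH. thHw i j) \<le> real m) \<and> (\<Sum>i\<in>TH. thH i) \<le> real m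
      \<longleftrightarrow> (\<Sum>i\<in>TH. thH i) \<le> real m"
    using const by (auto intro!: sum.cong)
  have w: "\<forall>j\<in>{1..n}. 0 \<le> w j" and rates: "\<forall>i\<in>TH. 0 < thL i \<and> 0 < thH i"
    using assms(2) by (auto simp: rate_assignment_def n_def TH_def HIset_def)
  have task: "\<forall>i\<in>TH. 0 < per i \<and> 0 \<le> CL i"
    using assms(1) by (auto simp: task_system_def TH_def HIset_def)
  note S4_S5 = hi_task_conditions_constant_rate_iff
    [where k = "ecw n w per CL thL i" and thL = thL and thHw = thHw and thH = thH
      and per = per and CL = CL and CH = CH and i = i for i, OF const ecw_in_range w]
  show ?thesis
    unfolding multi_rate_conditions_def dual_rate_conditions_def Let_def
      n_def[symmetric] TH_def[symmetric]
    using S3 S4_S5 rates task by blast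
qed

end
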